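(* Let $n\ge 1$ and let $\mathbf{k}=(k_1,\dots,k_n)$ be a vector of positive integers. Let $\mathcal{K}$ be the set of all vectors $\mathbf{k}'$ obtained by permuting the entries of $\mathbf{k}$, and put $\mathcal{D}_{\mathcal{K}}=\bigcup_{\mathbf{k}'\in\mathcal{K}}\mathcal{D}_{\mathbf{k}'}$, $\mathcal{D}_{\mathcal{K}^+}=\bigcup_{\mathbf{k}'\in\mathcal{K}}\mathcal{D}_{\mathbf{k}'^+}$, $\mathcal{D}_{\mathcal{K}^-}=\bigcup_{\mathbf{k}'\in\mathcal{K}}\mathcal{D}_{\mathbf{k}'^-}$, where $\mathbf{k}'^{\pm}=\mathbf{k}'\pm\frac1n(1,\dots,1)$. Then the sweep map $\Phi$ restricts to bijections $\mathcal{D}_{\mathcal{K}^+}\to\mathcal{D}_{\mathcal{K}^+}$, $\mathcal{D}_{\mathcal{K}^-}\to\mathcal{D}_{\mathcal{K}^-}$ and $\mathcal{D}_{\mathcal{K}}\to\mathcal{D}_{\mathcal{K}}$.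
   Context: For a vector $\mathbf{u}=(u_1,\dots,u_n)$ of positive rational numbers with $|\mathbf{u}|=u_1+\cdots+u_n$ a positive integer, $\mathcal{D}_{\mathbf{u}}$ denotes the set of sequences $D=(a_1,\dots,a_N)$, $N=n+|\mathbf{u}|$, whose positive entries are $u_1,\dots,u_n$ in this order from left to right, whose remaining $|\mathbf{u}|$ entries all equal $-1$, and whose partial sums $r_i=a_1+\cdots+a_{i-1}$ (so $r_1=0$) are all $\ge 0$; $r_i$ is the (starting) rank of the $i$-th step. (Geometrically: lattice paths from $(0,0)$ to $(N,0)$ with up steps $(1,u_i)$ and down steps $(1,-1)$ never going below the horizontal axis.) The sweep map $\Phi$ is defined on such sequences as follows: let $\pi$ be the permutation of $\{1,\dots,N\}$ listing the positions $i$ in order of increasing rank $r_i$, and, among positions of equal rank, in decreasing order of $i$ (right to left); then $\Phi(D)=(a_{\pi(1)},a_{\pi(2)},\dots,a_{\pi(N)})$. *)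

theory Defs
  imports Complex_Main "HOL-Library.Product_Lexorder" "HOL-Library.Multiset"
begin

text \<open>Sequences are lists of rationals, positions are 0-based.
  The rank of position i is the sum of the entries strictly before it.\<close>

definition rank :: "rat list \<Rightarrow> nat \<Rightarrow> rat" where
  "rank a i = sum_list (take i a)"

definition Dset :: "rat list \<Rightarrow> rat list set" where
  "Dset u = {a. \<exists>m::nat. sum_list u = of_nat m
                 \<and> length a = length u + m
                 \<and> filter (\<lambda>x. 0 < x) a = u
                 \<and> (\<forall>x\<in>set a. 0 < x \<or> x = -1)
                 \<and> (\<forall>i\<le>length a. 0 \<le> rank a i)}"

definition sweep_order :: "rat list \<Rightarrow> nat list" where
  "sweep_order a = sort_key (\<lambda>i. (rank a i, - int i)) [0..<length a]"

definition sweep :: "rat list \<Rightarrow> rat list" where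
  "sweep a = map (\<lambda>i. a ! i) (sweep_order a)"

definition shiftv :: "rat \<Rightarrow> nat list \<Rightarrow> rat list" where
  "shiftv c k = map (\<lambda>x. of_nat x + c) k"

definition DK :: "rat \<Rightarrow> nat list \<Rightarrow> rat list set" where
  "DK c k = (\<Union>k'\<in>{k'. mset k' = mset k}. Dset (shiftv c k'))"

end

theory Submission
  imports Defs
begin

text \<open>Replace every up step \<open>\<kappa> + c\<close> of a path in \<open>D\<^sub>K\<^sub>\<plusminus>\<close> or \<open>D\<^sub>K\<close> by \<open>\<kappa>\<close>. The rank of
  position \<open>i\<close> becomes \<open>R\<^sub>i + c u\<^sub>i\<close>, where \<open>R\<^sub>i\<close> is the rank in the integer path and
  \<open>0 \<le> u\<^sub>i \<le> n\<close> counts the up steps before \<open>i\<close>. As \<open>|c u\<^sub>i| \<le> 1\<close>, and \<open>u\<^sub>i\<close> grows between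
  two visits of the same integer level, the sweep order of the path is the sweep order of the
  integer path, with ties broken left to right for \<open>c = 1/n\<close> and right to left otherwise.
  So it suffices that these integer sweeps are injective, for paths ending at \<open>-1\<close>, resp.
  \<open>0\<close> (for \<open>c = -1/n\<close> the integer path ends at 1 and a down step is appended). This holds
  because the levels of the swept steps are determined by the swept word, by counting the down
  steps leaving each level, and word and levels together determine the path. Finally the sweep
  map sends \<open>D\<^sub>K\<close> into itself, since ranks of the sweep stay nonnegative by a telescoping
  argument, and an injective self-map of a finite set is bijective.\<close>

section \<open>Sorting positions by an injective key\<close>

lemma sort_key_upt_less_iff:
  fixes f :: "nat \<Rightarrow> 'b::linorder"
  assumes inj: "inj_on f {..<N}" and "s < N" "t < N"
  shows "f (sort_key f [0..<N] ! s) < f (sort_key f [0..<N] ! t) \<longleftrightarrow> s < t"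
proof -
  let ?p = "sort_key f [0..<N]"
  have mono: "f (?p ! i) \<le> f (?p ! j)" if "i \<le> j" "j < N" for i j
    using sorted_nth_mono[OF sorted_sort_key, of i j f "[0..<N]"] that by simp
  have "f (?p ! s) \<noteq> f (?p ! t)" if "s \<noteq> t"
  proof -
    have "?p ! s \<noteq> ?p ! t"
      using that assms by (simp add: nth_eq_iff_index_eq)
    moreover have "?p ! s \<in> {..<N}" "?p ! t \<in> {..<N}"
      using assms nth_mem[of _ ?p] by simp_all
    ultimately show ?thesis
      using inj_onD[OF inj] by blast
  qed
  then show ?thesis
    using mono[of s t] mono[of t s] assms by (metis leD linorder_le_cases order_le_neq_trans)
qed

lemma card_sort_key_upt:
  "card {t. t < N \<and> Q (sort_key f [0..<N] ! t)} = card {i. i < N \<and> Q i}"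
proof -
  have "card {t. t < N \<and> Q (sort_key f [0..<N] ! t)} = length (filter Q (sort_key f [0..<N]))"
    by (simp add: length_filter_conv_card)
  also have "\<dots> = length (filter Q [0..<N])"
    by (simp add: filter_sort)
  finally show ?thesis
    by (simp add: length_filter_conv_card cong: conj_cong)
qed

lemma nth_sort_key_upt_card_less:
  fixes f :: "nat \<Rightarrow> 'b::linorder"
  assumes inj: "inj_on f {..<N}" and i: "i < N"
  shows "sort_key f [0..<N] ! card {j. j < N \<and> f j < f i} = i"
proof -
  let ?p = "sort_key f [0..<N]"
  have "i \<in> set ?p"
    using i by simp
  then obtain t where t: "t < N" "?p ! t = i"
    by (metis in_set_conv_nth length_sort length_upt minus_nat.diff_0)
  have "card {j. j < N \<and> f j < f i} = card {s. s < N \<and> f (?p ! s) < f i}"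
    using card_sort_key_upt[of N "\<lambda>j. f j < f i" f] by simp
  also have "{s. s < N \<and> f (?p ! s) < f i} = {..<t}"
    using sort_key_upt_less_iff[OF inj _ t(1)] t by auto
  finally show ?thesis
    using t by simp
qed

lemma set_take_sort_key_upt:
  fixes f :: "nat \<Rightarrow> 'b::linorder"
  assumes inj: "inj_on f {..<N}" and t: "t < N"
  shows "set (take t (sort_key f [0..<N])) = {q. q < N \<and> f q < f (sort_key f [0..<N] ! t)}"
proof -
  let ?p = "sort_key f [0..<N]"
  have "set (take t ?p) = (!) ?p ` {..<t}"
    using t nth_image[of t ?p] by (simp add: atLeast0LessThan)
  also have "\<dots> = (!) ?p ` {s. s < N \<and> f (?p ! s) < f (?p ! t)}"
    using sort_key_upt_less_iff[OF inj _ t] t by (intro arg_cong[where f = "image _"]) auto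
  also have "\<dots> = {q \<in> set ?p. f q < f (?p ! t)}"
  proof -
    have "(!) xs ` {s. s < length xs \<and> P (xs ! s)} = {q \<in> set xs. P q}" for xs :: "nat list" and P
      by (auto simp: in_set_conv_nth)
    from this[of ?p] show ?thesis
      by simp
  qed
  also have "\<dots> = {q. q < N \<and> f q < f (?p ! t)}"
    by auto
  finally show ?thesis .
qed

lemma sort_key_upt_eq:
  fixes f :: "nat \<Rightarrow> 'b::linorder" and g :: "nat \<Rightarrow> 'c::linorder"
  assumes inj: "inj_on f {..<N}" "inj_on g {..<N}"
    and mono: "\<And>i j. i < N \<Longrightarrow> j < N \<Longrightarrow> f i < f j \<Longrightarrow> g i < g j"
  shows "sort_key g [0..<N] = sort_key f [0..<N]"
proof (rule sort_key_inj_key_eq)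
  let ?p = "sort_key f [0..<N]"
  show "mset [0..<N] = mset ?p" "inj_on g (set [0..<N])"
    using inj by (simp_all add: atLeast0LessThan)
  have "g (?p ! s) < g (?p ! t)" if "s < t" "t < N" for s t
    using that sort_key_upt_less_iff[OF inj(1), of s t] mono nth_mem[of _ ?p] by simp
  then show "sorted (map g ?p)"
    by (simp add: sorted_iff_nth_mono_less less_imp_le)
qed

section \<open>Integer paths and their sweep\<close>

definition irank :: "int list \<Rightarrow> nat \<Rightarrow> int" where
  "irank x i = sum_list (take i x)"

definition sweep_key :: "bool \<Rightarrow> int list \<Rightarrow> nat \<Rightarrow> int \<times> int" where
  "sweep_key ltr x i = (irank x i, if ltr then int i else - int i)"

abbreviation isweep_order :: "bool \<Rightarrow> int list \<Rightarrow> nat list" where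
  "isweep_order ltr x \<equiv> sort_key (sweep_key ltr x) [0..<length x]"

definition isweep :: "bool \<Rightarrow> int list \<Rightarrow> int list" where
  "isweep ltr x = map (nth x) (isweep_order ltr x)"

definition sweep_levels :: "bool \<Rightarrow> int list \<Rightarrow> int list" where
  "sweep_levels ltr x = map (irank x) (isweep_order ltr x)"

definition int_path :: "int list \<Rightarrow> bool" where
  "int_path x \<longleftrightarrow> (\<forall>v\<in>set x. v = -1 \<or> 1 \<le> v) \<and> (\<forall>i<length x. 0 \<le> irank x i)"

lemma irank_0 [simp]: "irank x 0 = 0"
  by (simp add: irank_def)

lemma irank_Suc: "i < length x \<Longrightarrow> irank x (Suc i) = irank x i + x ! i"
  by (simp add: irank_def take_Suc_conv_app_nth)

lemma irank_eq_if_take_eq: "j \<le> p \<Longrightarrow> take p x = take p y \<Longrightarrow> irank x j = irank y j"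
  unfolding irank_def by (metis min.absorb1 take_take)

lemma inj_on_sweep_key: "inj_on (sweep_key ltr x) A"
  by (auto simp: inj_on_def sweep_key_def split: if_splits)

lemma length_isweep [simp]: "length (isweep ltr x) = length x"
  by (simp add: isweep_def)

lemma length_sweep_levels [simp]: "length (sweep_levels ltr x) = length x"
  by (simp add: sweep_levels_def)

lemma nth_isweep: "t < length x \<Longrightarrow> isweep ltr x ! t = x ! (isweep_order ltr x ! t)"
  by (simp add: isweep_def)

lemma nth_sweep_levels: "t < length x \<Longrightarrow> sweep_levels ltr x ! t = irank x (isweep_order ltr x ! t)"
  by (simp add: sweep_levels_def)

lemma nth_isweep_order_less: "t < length x \<Longrightarrow> isweep_order ltr x ! t < length x"
  using nth_mem[of t "isweep_order ltr x"] by simp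

lemma isweep_order_surj: "i < length x \<Longrightarrow> \<exists>t<length x. isweep_order ltr x ! t = i"
  by (metis atLeastLessThan_iff in_set_conv_nth length_sort length_upt minus_nat.diff_0 set_sort
      set_upt zero_le)

lemma isweep_order_less_iff:
  "s < length x \<Longrightarrow> t < length x \<Longrightarrow>
   sweep_key ltr x (isweep_order ltr x ! s) < sweep_key ltr x (isweep_order ltr x ! t) \<longleftrightarrow> s < t"
  by (rule sort_key_upt_less_iff[OF inj_on_sweep_key])

lemma card_sweep_levels:
  "card {t. t < length x \<and> Q (sweep_levels ltr x ! t) (isweep ltr x ! t)}
   = card {j. j < length x \<and> Q (irank x j) (x ! j)}"
proof -
  have "{t. t < length x \<and> Q (sweep_levels ltr x ! t) (isweep ltr x ! t)}
      = {t. t < length x \<and> (\<lambda>j. Q (irank x j) (x ! j)) (isweep_order ltr x ! t)}"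
    by (auto simp: nth_sweep_levels nth_isweep)
  then show ?thesis
    using card_sort_key_upt[of "length x" "\<lambda>j. Q (irank x j) (x ! j)" "sweep_key ltr x"] by simp
qed

lemma sweep_levels_mono:
  assumes "s \<le> t" "t < length x"
  shows "sweep_levels ltr x ! s \<le> sweep_levels ltr x ! t"
proof (cases "s = t")
  case False
  then have "sweep_key ltr x (isweep_order ltr x ! s) < sweep_key ltr x (isweep_order ltr x ! t)"
    using isweep_order_less_iff[of s x t ltr] assms by simp
  then show ?thesis
    using assms by (auto simp: nth_sweep_levels sweep_key_def)
qed simp

lemma sweep_levels_nonneg: "int_path x \<Longrightarrow> t < length x \<Longrightarrow> 0 \<le> sweep_levels ltr x ! t"
  by (simp add: int_path_def nth_sweep_levels nth_isweep_order_less)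

lemma sweep_levels_0:
  assumes "int_path x" "0 < length x"
  shows "sweep_levels ltr x ! 0 = 0"
proof -
  obtain t where t: "t < length x" "isweep_order ltr x ! t = 0"
    using isweep_order_surj[OF assms(2)] by blast
  have "sweep_levels ltr x ! 0 \<le> sweep_levels ltr x ! t"
    using sweep_levels_mono[of 0 t x ltr] t by simp
  also have "\<dots> = 0"
    using t by (simp add: nth_sweep_levels)
  finally show ?thesis
    using sweep_levels_nonneg[OF assms, of ltr] by simp
qed

lemma down_step_at_crossing:
  assumes steps: "\<forall>v\<in>set x. v = -1 \<or> 1 \<le> v"
  shows "i < j \<Longrightarrow> j \<le> length x \<Longrightarrow> g \<le> irank x i \<Longrightarrow> irank x j < g \<Longrightarrow>
     \<exists>q. i \<le> q \<and> q < j \<and> irank x q = g \<and> x ! q = -1"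
proof (induction j)
  case (Suc j)
  have step: "x ! j = -1 \<or> 1 \<le> x ! j"
    using steps Suc.prems(2) by auto
  have rank: "irank x (Suc j) = irank x j + x ! j"
    using Suc.prems(2) by (simp add: irank_Suc)
  show ?case
  proof (cases "g \<le> irank x j")
    case True
    then show ?thesis
      using step rank Suc.prems by (intro exI[of _ j]) auto
  next
    case False
    then have "i < j"
      using Suc.prems(1,3) by (metis less_SucE)
    with Suc.IH False Suc.prems show ?thesis
      by (meson Suc_leD less_SucI not_le)
  qed
qed simp

lemma last_visit_is_down_step:
  assumes "int_path x" and p: "p < length x" and "irank x (length x) < irank x p"
    and last: "\<And>q. p < q \<Longrightarrow> q < length x \<Longrightarrow> irank x q \<noteq> irank x p"
  shows "x ! p = -1"
proof (rule ccontr)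
  assume "x ! p \<noteq> -1"
  then have "1 \<le> x ! p"
    using assms(1) p by (auto simp: int_path_def)
  then have up: "irank x p + 1 \<le> irank x (Suc p)"
    using p by (simp add: irank_Suc)
  have "Suc p \<noteq> length x"
    using assms(3) up by auto
  then have "Suc p < length x"
    using p by simp
  then obtain q where "Suc p \<le> q" "q < length x" "irank x q = irank x p"
    using down_step_at_crossing[of x "Suc p" "length x" "irank x p"] assms(1,3) up
    by (auto simp: int_path_def)
  then show False
    using last by simp
qed

text \<open>Hypothesis \<open>rightmost\<close>: \<open>s\<close> sweeps the rightmost path position of its level.\<close>

lemma isweep_rightmost_at_level_is_down:
  assumes path: "int_path x" and s: "s < length x"
    and above: "irank x (length x) < sweep_levels ltr x ! s"
    and rightmost: "\<And>t. t < length x \<Longrightarrow> sweep_levels ltr x ! t = sweep_levels ltr x ! s \<Longrightarrow>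
                      (if ltr then t \<le> s else s \<le> t)"
  shows "isweep ltr x ! s = -1"
proof -
  let ?p = "isweep_order ltr x ! s"
  have "x ! ?p = -1"
  proof (rule last_visit_is_down_step[OF path nth_isweep_order_less[OF s]])
    show "irank x (length x) < irank x ?p"
      using above s by (simp add: nth_sweep_levels)
    fix q assume q: "?p < q" "q < length x"
    obtain t where t: "t < length x" "isweep_order ltr x ! t = q"
      using isweep_order_surj[OF q(2)] by blast
    show "irank x q \<noteq> irank x ?p"
    proof
      assume same: "irank x q = irank x ?p"
      then have "sweep_levels ltr x ! t = sweep_levels ltr x ! s"
        using t s by (simp add: nth_sweep_levels)
      then have "if ltr then t < s else s < t"
        using rightmost[OF t(1)] q(1) t(2) by (auto simp: le_less)
      then show False
        using isweep_order_less_iff[OF t(1) s, of ltr] isweep_order_less_iff[OF s t(1), of ltr] q t same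
        by (auto simp: sweep_key_def split: if_splits)
    qed
  qed
  then show ?thesis
    using s by (simp add: nth_isweep)
qed

lemma sweep_levels_Suc_le:
  assumes path: "int_path x" and "irank x (length x) \<le> 0" and t: "Suc t < length x"
  shows "sweep_levels ltr x ! Suc t \<le> sweep_levels ltr x ! t + 1"
proof (rule ccontr)
  assume jump: "\<not> ?thesis"
  let ?g = "sweep_levels ltr x ! t + 1" and ?p = "isweep_order ltr x ! Suc t"
  have "1 \<le> ?g"
    using sweep_levels_nonneg[OF path, of t ltr] t by simp
  moreover have "?g \<le> irank x ?p"
    using jump t by (simp add: nth_sweep_levels)
  ultimately obtain q where q: "q < length x" "irank x q = ?g"
    using down_step_at_crossing[of x ?p "length x" ?g] path assms(2) nth_isweep_order_less[OF t]
    by (force simp: int_path_def)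
  obtain u where u: "u < length x" "isweep_order ltr x ! u = q"
    using isweep_order_surj[OF q(1)] by blast
  have "sweep_levels ltr x ! u = ?g"
    using u q by (simp add: nth_sweep_levels)
  then show False
    using sweep_levels_mono[of u t x ltr] sweep_levels_mono[of "Suc t" u x ltr] jump t u(1)
    by (cases "u \<le> t") auto
qed

text \<open>Count the visits of level \<open>g\<close> among the ranks \<open>0, \<dots>, length x\<close> twice: by the position
  where they occur, and by the step arriving there (the visit at rank 0 has none).\<close>

lemma level_balance:
  assumes steps: "\<forall>v\<in>set x. v = -1 \<or> 1 \<le> v"
  shows "card {p. p < length x \<and> x ! p = -1 \<and> irank x p = g + 1}
       + card {p. p < length x \<and> 1 \<le> x ! p \<and> irank x p + x ! p = g}
       + (if g = 0 then 1 else 0)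
       = card {p. p < length x \<and> irank x p = g} + (if irank x (length x) = g then 1 else 0)"
proof -
  let ?N = "length x"
  let ?V = "{q. q \<le> ?N \<and> irank x q = g}"
  have step: "x ! p = -1 \<or> 1 \<le> x ! p" if "p < ?N" for p
    using steps that by simp
  have "{p. p < ?N \<and> irank x (Suc p) = g} =
        {p. p < ?N \<and> x ! p = -1 \<and> irank x p = g + 1} \<union> {p. p < ?N \<and> 1 \<le> x ! p \<and> irank x p + x ! p = g}"
    using step by (auto simp: irank_Suc) force+
  then have arrivals: "card {p. p < ?N \<and> irank x (Suc p) = g} =
        card {p. p < ?N \<and> x ! p = -1 \<and> irank x p = g + 1} + card {p. p < ?N \<and> 1 \<le> x ! p \<and> irank x p + x ! p = g}"
    by (simp add: card_Un_disjoint disjoint_iff)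
  have "Suc ` {p. p < ?N \<and> irank x (Suc p) = g} = {q. 0 < q \<and> q \<le> ?N \<and> irank x q = g}"
    by (auto simp: image_iff gr0_conv_Suc)
  moreover have "?V = {q. 0 < q \<and> q \<le> ?N \<and> irank x q = g} \<union> (if g = 0 then {0} else {})"
    by (cases "g = 0") (auto intro: gr0I)
  ultimately have "?V = Suc ` {p. p < ?N \<and> irank x (Suc p) = g} \<union> (if g = 0 then {0} else {})"
    by simp
  then have by_step: "card ?V = card {p. p < ?N \<and> irank x (Suc p) = g} + (if g = 0 then 1 else 0)"
    by (simp add: card_Un_disjoint card_image)
  have "?V = {p. p < ?N \<and> irank x p = g} \<union> (if irank x ?N = g then {?N} else {})"
    by (auto simp: le_less)
  then have by_position: "card ?V = card {p. p < ?N \<and> irank x p = g} + (if irank x ?N = g then 1 else 0)"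
    by (simp add: card_Un_disjoint)
  show ?thesis
    using arrivals by_step by_position by simp
qed

lemma sweep_level_balance:
  assumes "int_path x"
  shows "card {t. t < length x \<and> isweep ltr x ! t = -1 \<and> sweep_levels ltr x ! t = g + 1}
       + card {t. t < length x \<and> 1 \<le> isweep ltr x ! t \<and> sweep_levels ltr x ! t + isweep ltr x ! t = g}
       + (if g = 0 then 1 else 0)
       = card {t. t < length x \<and> sweep_levels ltr x ! t = g} + (if irank x (length x) = g then 1 else 0)"
  using level_balance[of x g] assms
    card_sweep_levels[where Q = "\<lambda>r w. w = -1 \<and> r = g + 1" and x = x and ltr = ltr]
    card_sweep_levels[where Q = "\<lambda>r w. 1 \<le> w \<and> r + w = g" and x = x and ltr = ltr]
    card_sweep_levels[where Q = "\<lambda>r w. r = g" and x = x and ltr = ltr]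
  by (simp add: int_path_def)

lemma card_sweep_key_less:
  assumes p: "p < length x"
  defines "h \<equiv> irank x p"
  shows "card {j. j < length x \<and> sweep_key ltr x j < sweep_key ltr x p} =
     card {t. t < length x \<and> sweep_levels ltr x ! t < h} +
     (if ltr then card {j. j < p \<and> irank x j = h}
      else card {t. t < length x \<and> sweep_levels ltr x ! t = h} - card {j. j \<le> p \<and> irank x j = h})"
proof -
  let ?N = "length x"
  let ?ties = "{j. j < ?N \<and> irank x j = h \<and> (if ltr then j < p else p < j)}"
  have "{j. j < ?N \<and> sweep_key ltr x j < sweep_key ltr x p} = {j. j < ?N \<and> irank x j < h} \<union> ?ties"
    by (auto simp: sweep_key_def h_def split: if_splits)
  then have "card {j. j < ?N \<and> sweep_key ltr x j < sweep_key ltr x p} =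
      card {j. j < ?N \<and> irank x j < h} + card ?ties"
    by (simp add: card_Un_disjoint disjoint_iff)
  moreover have "card {j. j < ?N \<and> irank x j < h} = card {t. t < ?N \<and> sweep_levels ltr x ! t < h}"
    using card_sweep_levels[where Q = "\<lambda>r w. r < h" and x = x and ltr = ltr] by simp
  moreover have "card ?ties = card {j. j < p \<and> irank x j = h}" if ltr
    using that p by (intro arg_cong[where f = card]) auto
  moreover have "card ?ties = card {t. t < ?N \<and> sweep_levels ltr x ! t = h} - card {j. j \<le> p \<and> irank x j = h}"
    if "\<not> ltr"
  proof -
    have "?ties = {j. j < ?N \<and> irank x j = h} - {j. j \<le> p \<and> irank x j = h}"
      using that p by auto
    moreover have "card {j. j < ?N \<and> irank x j = h} = card {t. t < ?N \<and> sweep_levels ltr x ! t = h}"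
      using card_sweep_levels[where Q = "\<lambda>r w. r = h" and x = x and ltr = ltr] by simp
    ultimately show ?thesis
      using p by (simp add: card_Diff_subset subset_iff)
  qed
  ultimately show ?thesis
    by simp
qed

text \<open>Position \<open>p\<close> is read off at its sweep index, which by \<open>card_sweep_key_less\<close> only
  depends on the levels and on the prefix before \<open>p\<close>.\<close>

lemma eq_if_isweep_eq_sweep_levels_eq:
  assumes len: "length x = length y"
    and sweep: "isweep ltr x = isweep ltr y" and levels: "sweep_levels ltr x = sweep_levels ltr y"
  shows "x = y"
proof -
  let ?N = "length x"
  let ?idx = "\<lambda>z p. card {j. j < length z \<and> sweep_key ltr z j < sweep_key ltr z p}"
  have "take p x = take p y" if "p \<le> ?N" for p
    using that
  proof (induction p)
    case (Suc p)
    then have p: "p < ?N" and prefix: "take p x = take p y"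
      by auto
    have "\<And>j. j \<le> p \<Longrightarrow> irank x j = irank y j"
      using irank_eq_if_take_eq[OF _ prefix] .
    then have "?idx x p = ?idx y p"
      using card_sweep_key_less[OF p, of ltr] card_sweep_key_less[of p y ltr] p len levels
      by (cases ltr) (simp_all cong: conj_cong)
    moreover have "isweep_order ltr z ! ?idx z p = p" if "p < length z" for z
      using nth_sort_key_upt_card_less[OF inj_on_sweep_key that] by simp
    moreover have "?idx z p < length z" if "p < length z" for z
    proof -
      have "?idx z p \<le> card ({..<length z} - {p})"
        by (rule card_mono) auto
      then show ?thesis
        using that by simp
    qed
    ultimately have "x ! p = y ! p"
      using sweep nth_isweep[of _ x ltr] nth_isweep[of _ y ltr] p len by metis
    then show ?case
      using prefix p len by (simp add: take_Suc_conv_app_nth)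
  qed simp
  from this[of ?N] len show ?thesis
    by simp
qed

text \<open>Compare the level balance at \<open>h - 1\<close> for both paths: all its other terms only involve
  levels below \<open>h\<close>.\<close>

lemma down_steps_at_level_eq:
  assumes px: "int_path x" and py: "int_path y" and len: "length y = length x"
    and ends: "irank y (length y) = irank x (length x)" and sweep: "isweep ltr x = isweep ltr y"
    and below: "\<And>t. t < length x \<Longrightarrow> sweep_levels ltr x ! t < h \<or> sweep_levels ltr y ! t < h \<Longrightarrow>
                  sweep_levels ltr x ! t = sweep_levels ltr y ! t"
  shows "card {t. t < length x \<and> isweep ltr x ! t = -1 \<and> sweep_levels ltr x ! t = h}
       = card {t. t < length x \<and> isweep ltr y ! t = -1 \<and> sweep_levels ltr y ! t = h}"
proof -
  let ?W = "isweep ltr x" and ?Lx = "sweep_levels ltr x" and ?Ly = "sweep_levels ltr y"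
  have "?Lx ! t = g \<longleftrightarrow> ?Ly ! t = g" if "t < length x" "g < h" for t g
    using below[OF that(1)] that(2) by (cases "?Lx ! t < h \<or> ?Ly ! t < h") auto
  then have at: "{t. t < length x \<and> ?Lx ! t = h - 1} = {t. t < length x \<and> ?Ly ! t = h - 1}"
    and up: "{t. t < length x \<and> 1 \<le> ?W ! t \<and> ?Lx ! t + ?W ! t = h - 1}
       = {t. t < length x \<and> 1 \<le> ?W ! t \<and> ?Ly ! t + ?W ! t = h - 1}"
    by (auto simp: eq_diff_eq[symmetric])
  show ?thesis
    using sweep_level_balance[OF px, of ltr "h - 1"] sweep_level_balance[OF py, of ltr "h - 1"]
      at up len ends sweep by simp
qed

lemma isweep_first_at_level_is_down:
  assumes "int_path x" "s < length x" "irank x (length x) < sweep_levels False x ! s"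
    and first: "\<And>t. t < s \<Longrightarrow> sweep_levels False x ! t < sweep_levels False x ! s"
  shows "isweep False x ! s = -1"
proof (rule isweep_rightmost_at_level_is_down[OF assms(1-3)])
  show "if False then t \<le> s else s \<le> t"
    if "t < length x" "sweep_levels False x ! t = sweep_levels False x ! s" for t
    using first[of t] that by (cases "t < s") auto
qed

lemma isweep_last_at_level_is_down:
  assumes "int_path x" "s < length x" "irank x (length x) < sweep_levels True x ! s"
  obtains m where "s \<le> m" "m < length x" "sweep_levels True x ! m = sweep_levels True x ! s"
    "isweep True x ! m = -1"
proof -
  let ?M = "{t. t < length x \<and> sweep_levels True x ! t = sweep_levels True x ! s}"
  define m where "m = Max ?M"
  have fin: "finite ?M" and "s \<in> ?M"
    using assms(2) by simp_all
  then have m: "m \<in> ?M" "s \<le> m" and m_max: "\<And>t. t \<in> ?M \<Longrightarrow> t \<le> m"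
    unfolding m_def using Max_in[OF fin] Max_ge[OF fin] by blast+
  have "isweep True x ! m = -1"
    by (rule isweep_rightmost_at_level_is_down[OF assms(1)]) (use m m_max assms(3) in auto)
  then show ?thesis
    using that m by simp
qed

text \<open>The down step is found at the rightmost visit of level \<open>h + 1\<close> in \<open>x\<close> when ties are
  broken right to left, and at the rightmost visit of level \<open>h\<close> in \<open>y\<close> otherwise.\<close>

lemma down_step_after_split:
  assumes px: "int_path x" and py: "int_path y" and len: "length y = length x"
    and ex: "irank x (length x) = e" and ey: "irank y (length y) = e"
    and e: "e \<le> 0" "ltr \<longrightarrow> e < 0" and sweep: "isweep ltr x = isweep ltr y"
    and s: "s < length x" "0 < s"
    and hx: "sweep_levels ltr x ! (s - 1) = h" and sx: "sweep_levels ltr x ! s = h + 1"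
    and sy: "sweep_levels ltr y ! s = h"
  obtains s' where "s \<le> s'" "s' < length x" "isweep ltr y ! s' = -1" "sweep_levels ltr y ! s' = h"
proof -
  have "0 \<le> h"
    using sweep_levels_nonneg[OF py, of s ltr] s sy len by simp
  show ?thesis
  proof (cases ltr)
    case False
    have "sweep_levels ltr x ! t < sweep_levels ltr x ! s" if "t < s" for t
      using sweep_levels_mono[of t "s - 1" x ltr] that hx sx s by simp
    then have "isweep ltr x ! s = -1"
      using isweep_first_at_level_is_down[OF px s(1)] ex e sx \<open>0 \<le> h\<close> False by simp
    then show ?thesis
      using that[of s] s sy sweep by simp
  next
    case True
    then obtain m where "s \<le> m" "m < length y" "sweep_levels ltr y ! m = h" "isweep ltr y ! m = -1"
      using isweep_last_at_level_is_down[OF py, of s] s len ey e sy \<open>0 \<le> h\<close> by auto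
    then show ?thesis
      using that len by simp
  qed
qed

lemma sweep_levels_split_absurd:
  assumes px: "int_path x" and py: "int_path y" and len: "length y = length x"
    and ex: "irank x (length x) = e" and ey: "irank y (length y) = e"
    and e: "e \<le> 0" "ltr \<longrightarrow> e < 0" and sweep: "isweep ltr x = isweep ltr y"
    and s: "s < length x" "0 < s" and agree: "\<And>t. t < s \<Longrightarrow> sweep_levels ltr x ! t = sweep_levels ltr y ! t"
    and hx: "sweep_levels ltr x ! (s - 1) = h" and sx: "sweep_levels ltr x ! s = h + 1"
    and sy: "sweep_levels ltr y ! s = h"
  shows False
proof -
  let ?N = "length x" and ?W = "isweep ltr x" and ?Lx = "sweep_levels ltr x" and ?Ly = "sweep_levels ltr y"
  let ?downs = "\<lambda>L. {t. t < ?N \<and> ?W ! t = -1 \<and> L ! t = h}"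
  have hy: "?Ly ! (s - 1) = h"
    using agree hx s by simp
  have "card (?downs ?Lx) = card (?downs ?Ly)"
  proof (rule down_steps_at_level_eq[OF px py len _ sweep, folded sweep])
    show "irank y (length y) = irank x (length x)"
      using ex ey by simp
    fix t assume t: "t < ?N" "?Lx ! t < h \<or> ?Ly ! t < h"
    have "t < s"
      using sweep_levels_mono[of "s - 1" t x ltr] sweep_levels_mono[of "s - 1" t y ltr] t hx hy len
      by (cases "s - 1 \<le> t") auto
    then show "?Lx ! t = ?Ly ! t"
      by (rule agree)
  qed
  also have "?downs ?Lx = {t. t < s \<and> ?W ! t = -1 \<and> ?Ly ! t = h}"
  proof -
    have before: "t < s" if "t < ?N" "?Lx ! t = h" for t
      using sweep_levels_mono[of s t x ltr] that sx by (cases "s \<le> t") auto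
    show ?thesis
    proof (intro Collect_cong iffI)
      fix t assume "t < ?N \<and> ?W ! t = -1 \<and> ?Lx ! t = h"
      then show "t < s \<and> ?W ! t = -1 \<and> ?Ly ! t = h"
        using before agree by metis
    next
      fix t assume "t < s \<and> ?W ! t = -1 \<and> ?Ly ! t = h"
      then show "t < ?N \<and> ?W ! t = -1 \<and> ?Lx ! t = h"
        using agree s(1) by auto
    qed
  qed
  finally have count: "card (?downs ?Ly) = card {t. t < s \<and> ?W ! t = -1 \<and> ?Ly ! t = h}" ..
  obtain s' where s': "s \<le> s'" "s' < ?N" "?W ! s' = -1" "?Ly ! s' = h"
    using down_step_after_split[OF assms(1-10) hx sx sy] sweep by metis
  then have "insert s' {t. t < s \<and> ?W ! t = -1 \<and> ?Ly ! t = h} \<subseteq> ?downs ?Ly"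
    using s by auto
  from card_mono[OF _ this] s' have "card {t. t < s \<and> ?W ! t = -1 \<and> ?Ly ! t = h} < card (?downs ?Ly)"
    by simp
  then show False
    using count by simp
qed

text \<open>The levels of a sweep start at 0, are weakly increasing and increase by at most one
  (\<open>sweep_levels_Suc_le\<close>), so two sweeps sharing a word first differ by a split as above.\<close>

lemma sweep_levels_eq_if_isweep_eq:
  assumes px: "int_path x" and py: "int_path y" and len: "length y = length x"
    and ex: "irank x (length x) = e" and ey: "irank y (length y) = e"
    and e: "e \<le> 0" "ltr \<longrightarrow> e < 0" and sweep: "isweep ltr x = isweep ltr y"
  shows "sweep_levels ltr x = sweep_levels ltr y"
proof (rule ccontr)
  let ?N = "length x" and ?Lx = "sweep_levels ltr x" and ?Ly = "sweep_levels ltr y"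
  assume "?Lx \<noteq> ?Ly"
  then have "\<exists>t. t < ?N \<and> ?Lx ! t \<noteq> ?Ly ! t"
    using len by (metis length_sweep_levels nth_equalityI)
  define s where "s = (LEAST t. t < ?N \<and> ?Lx ! t \<noteq> ?Ly ! t)"
  have s: "s < ?N" "?Lx ! s \<noteq> ?Ly ! s"
    using LeastI_ex[OF \<open>\<exists>t. t < ?N \<and> ?Lx ! t \<noteq> ?Ly ! t\<close>] unfolding s_def by blast+
  have agree: "?Lx ! t = ?Ly ! t" if "t < s" for t
    using not_less_Least[OF that[unfolded s_def]] that s(1) by simp
  have "0 < s"
    using s sweep_levels_0[OF px, of ltr] sweep_levels_0[OF py, of ltr] len by (metis gr0I)
  let ?h = "?Lx ! (s - 1)"
  have hy: "?Ly ! (s - 1) = ?h"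
    using agree \<open>0 < s\<close> by simp
  have "?h \<le> ?Lx ! s" "?Lx ! s \<le> ?h + 1"
    using sweep_levels_mono[of "s - 1" s x ltr] sweep_levels_Suc_le[OF px, of "s - 1" ltr] ex e s \<open>0 < s\<close>
    by auto
  moreover have "?h \<le> ?Ly ! s" "?Ly ! s \<le> ?h + 1"
    using sweep_levels_mono[of "s - 1" s y ltr] sweep_levels_Suc_le[OF py, of "s - 1" ltr] ey e s \<open>0 < s\<close> len hy
    by auto
  ultimately consider "?Lx ! s = ?h + 1" "?Ly ! s = ?h" | "?Ly ! s = ?h + 1" "?Lx ! s = ?h"
    using s(2) by fastforce
  then show False
  proof cases
    case 1
    then show False
      using sweep_levels_split_absurd[OF px py len ex ey e sweep s(1) \<open>0 < s\<close> agree refl] by simp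
  next
    case 2
    then show False
      using sweep_levels_split_absurd[OF py px len[symmetric] ey ex e sweep[symmetric] _ \<open>0 < s\<close> agree[symmetric] hy]
        s len by simp
  qed
qed

text \<open>Breaking ties left to right, the rightmost visit of level 0 need not be a down step
  when the path ends at 0; hence the stronger condition on the end point in that case.\<close>

theorem isweep_inj:
  assumes "int_path x" "int_path y" "length y = length x"
    and "irank x (length x) = e" "irank y (length y) = e" "e \<le> 0" "ltr \<longrightarrow> e < 0"
    and "isweep ltr x = isweep ltr y"
  shows "x = y"
  using eq_if_isweep_eq_sweep_levels_eq[OF assms(3)[symmetric] assms(8)
      sweep_levels_eq_if_isweep_eq[OF assms]] .

definition ups :: "int list \<Rightarrow> nat \<Rightarrow> nat" where
  "ups x i = length (filter (\<lambda>v. 0 < v) (take i x))"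

lemma take_split: "i \<le> j \<Longrightarrow> take j x = take i x @ take (j - i) (drop i x)"
  by (metis le_add_diff_inverse take_add)

lemma ups_mono: "i \<le> j \<Longrightarrow> ups x i \<le> ups x j"
  by (simp add: ups_def take_split[of i j x])

lemma ups_le_ups_length: "ups x i \<le> ups x (length x)"
  using ups_mono[of i "length x" x] by (cases "i \<le> length x") (auto simp: ups_def)

lemma irank_drop_if_no_ups:
  assumes steps: "\<forall>v\<in>set x. v = -1 \<or> 1 \<le> v" and "i \<le> j" and same: "ups x i = ups x j"
    and "j \<le> length x"
  shows "irank x j = irank x i - int (j - i)"
proof -
  let ?seg = "take (j - i) (drop i x)"
  have "filter (\<lambda>v. 0 < v) ?seg = []"
    using same \<open>i \<le> j\<close> by (simp add: ups_def take_split[of i j x])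
  then have "\<forall>v\<in>set ?seg. v = -1"
    using steps by (fastforce simp: filter_empty_conv dest: in_set_takeD in_set_dropD)
  moreover have "sum_list ys = - int (length ys)" if "\<forall>v\<in>set ys. v = -1" for ys :: "int list"
    using that by (induction ys) auto
  ultimately have "sum_list ?seg = - int (length ?seg)"
    by blast
  then show ?thesis
    using assms(2,4) by (simp add: irank_def take_split[of i j x])
qed

lemma ups_less_if_irank_le:
  assumes steps: "\<forall>v\<in>set x. v = -1 \<or> 1 \<le> v" and "i < j" "j \<le> length x"
    and "irank x i \<le> irank x j"
  shows "ups x i < ups x j"
  using ups_mono[of i j x] irank_drop_if_no_ups[OF steps, of i j] assms by fastforce

lemma isweep_order_append_down:
  assumes N: "0 < length x" and above: "\<And>i. 0 < i \<Longrightarrow> i \<le> length x \<Longrightarrow> 1 \<le> irank x i"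
    and last: "irank x (length x) = 1"
  shows "isweep_order False x = 0 # sort_key (sweep_key False x) [1..<length x]"
    and "isweep_order False (x @ [-1]) = 0 # length x # sort_key (sweep_key False x) [1..<length x]"
proof -
  let ?N = "length x" and ?f = "sweep_key False x" and ?g = "sweep_key False (x @ [-1])"
  let ?rest = "sort_key ?f [1..<?N]"
  have f_rest: "(0, 0) < ?f q" "(1, - int ?N) \<le> ?f q" if "q \<in> set ?rest" for q
    using that above[of q] by (auto simp: sweep_key_def)
  have f0: "?f 0 = (0, 0)"
    by (simp add: sweep_key_def)
  show "isweep_order False x = 0 # ?rest"
    using N f_rest(1) f0 by (simp add: upt_conv_Cons insort_is_Cons less_imp_le)
  have g_f: "?g q = ?f q" if "q \<le> ?N" for q
    using that by (simp add: sweep_key_def irank_def)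
  show "isweep_order False (x @ [-1]) = 0 # ?N # ?rest"
  proof (rule sort_key_inj_key_eq)
    show "mset [0..<length (x @ [-1])] = mset (0 # ?N # ?rest)"
      using N by (simp add: upt_conv_Cons)
    show "inj_on ?g (set [0..<length (x @ [-1])])"
      by (rule inj_on_sweep_key)
    have "map ?g ?rest = map ?f ?rest"
      by (rule map_cong) (auto simp: g_f)
    then have "sorted (map ?g ?rest)"
      by (metis sorted_sort_key)
    moreover have "?g 0 = (0, 0)" "?g ?N = (1, - int ?N)"
      using g_f[of 0] g_f[of ?N] last by (simp_all add: f0 sweep_key_def)
    ultimately show "sorted (map ?g (0 # ?N # ?rest))"
      using f_rest g_f by (auto simp: less_imp_le)
  qed
qed

lemma isweep_append_down:
  assumes "0 < length x" and "\<And>i. 0 < i \<Longrightarrow> i \<le> length x \<Longrightarrow> 1 \<le> irank x i"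
    and "irank x (length x) = 1"
  shows "isweep False (x @ [-1]) = hd (isweep False x) # -1 # tl (isweep False x)"
proof -
  let ?rest = "sort_key (sweep_key False x) [1..<length x]"
  have "map ((!) (x @ [-1])) ?rest = map ((!) x) ?rest"
    by (rule map_cong) (auto simp: nth_append)
  then show ?thesis
    using isweep_order_append_down[OF assms] assms(1) by (simp add: isweep_def nth_append)
qed

lemma int_path_append_down:
  assumes "\<forall>v\<in>set x. v = -1 \<or> 1 \<le> v" and above: "\<And>i. 0 < i \<Longrightarrow> i \<le> length x \<Longrightarrow> 1 \<le> irank x i"
  shows "int_path (x @ [-1])"
proof -
  have "irank (x @ [-1]) i = irank x i" if "i \<le> length x" for i
    using that by (simp add: irank_def)
  moreover have "0 \<le> irank x i" if "i \<le> length x" for i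
    using that above[of i] by (cases "i = 0") auto
  ultimately show ?thesis
    using assms(1) by (simp add: int_path_def less_Suc_eq_le)
qed

lemma isweep_inj_end_one:
  assumes steps: "\<forall>v\<in>set x. v = -1 \<or> 1 \<le> v" "\<forall>v\<in>set y. v = -1 \<or> 1 \<le> v"
    and nonempty: "0 < length x" "0 < length y"
    and above: "\<And>i. 0 < i \<Longrightarrow> i \<le> length x \<Longrightarrow> 1 \<le> irank x i"
      "\<And>i. 0 < i \<Longrightarrow> i \<le> length y \<Longrightarrow> 1 \<le> irank y i"
    and last: "irank x (length x) = 1" "irank y (length y) = 1"
    and sweep: "isweep False x = isweep False y"
  shows "x = y"
proof -
  have "isweep False (x @ [-1]) = isweep False (y @ [-1])"
    using isweep_append_down[OF nonempty(1) above(1) last(1)]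
      isweep_append_down[OF nonempty(2) above(2) last(2)] sweep by simp
  moreover have "length (y @ [-1]) = length (x @ [-1])"
    using length_isweep[of False x] length_isweep[of False y] sweep by simp
  moreover have "irank (x @ [-1]) (length (x @ [-1])) = 0" "irank (y @ [-1]) (length (y @ [-1])) = 0"
    using last by (simp_all add: irank_def)
  ultimately have "x @ [-1] = y @ [-1]"
    using isweep_inj[OF int_path_append_down[OF steps(1) above(1)] int_path_append_down[OF steps(2) above(2)]]
    by fastforce
  then show ?thesis
    by simp
qed

section \<open>From shifted rational paths to integer paths\<close>

definition int_step :: "rat \<Rightarrow> rat \<Rightarrow> int" where
  "int_step c v = (if v = -1 then -1 else \<lfloor>v - c\<rfloor>)"

definition shifted_steps :: "rat \<Rightarrow> rat list \<Rightarrow> bool" where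
  "shifted_steps c a \<longleftrightarrow> (\<forall>v\<in>set a. v = -1 \<or> (0 < v \<and> (\<exists>\<kappa>::nat. 1 \<le> \<kappa> \<and> v = of_nat \<kappa> + c)))"

definition shifted_path :: "rat \<Rightarrow> rat list \<Rightarrow> bool" where
  "shifted_path c a \<longleftrightarrow> shifted_steps c a \<and> (\<forall>i\<le>length a. 0 \<le> rank a i) \<and> sum_list a = 0"

lemma int_step_shifted:
  assumes "shifted_steps c a" "v \<in> set a"
  shows "v = -1 \<and> int_step c v = -1 \<or> 0 < v \<and> 1 \<le> int_step c v \<and> of_int (int_step c v) = v - c"
proof -
  consider "v = -1" | \<kappa> :: nat where "1 \<le> \<kappa>" "0 < v" "v = of_nat \<kappa> + c"
    using assms unfolding shifted_steps_def by blast
  then show ?thesis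
  proof cases
    case 2
    then have "int_step c v = int \<kappa>"
      by (auto simp: int_step_def)
    with 2 show ?thesis
      by simp
  qed (simp add: int_step_def)
qed

lemma int_steps_steps:
  "shifted_steps c a \<Longrightarrow> \<forall>w\<in>set (map (int_step c) a). w = -1 \<or> 1 \<le> w"
  using int_step_shifted by fastforce

lemma int_steps_inj:
  assumes "shifted_steps c a" "shifted_steps c b" "map (int_step c) a = map (int_step c) b"
  shows "a = b"
proof -
  define lift :: "int \<Rightarrow> rat" where "lift w = (if w = -1 then -1 else of_int w + c)" for w
  have "map (lift \<circ> int_step c) a' = a'" if "shifted_steps c a'" for a'
  proof (rule map_idI)
    fix u assume "u \<in> set a'"
    then show "(lift \<circ> int_step c) u = u"
      using int_step_shifted[OF that, of u] by (auto simp: lift_def)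
  qed
  then show ?thesis
    using assms by (metis map_map)
qed

lemma length_filter_int_steps:
  assumes "shifted_steps c a"
  shows "length (filter (\<lambda>w. 0 < w) (map (int_step c) a)) = length (filter (\<lambda>v. 0 < v) a)"
proof -
  have "0 < int_step c v \<longleftrightarrow> 0 < v" if "v \<in> set a" for v
    using int_step_shifted[OF assms that] by auto
  then have "filter ((<) 0 \<circ> int_step c) a = filter ((<) 0) a"
    by (intro filter_cong) auto
  then show ?thesis
    by (simp add: filter_map)
qed

lemma sum_list_int_steps:
  assumes "shifted_steps c a"
  shows "sum_list a = of_int (sum_list (map (int_step c) a)) + c * of_nat (length (filter (\<lambda>v. 0 < v) a))"
proof -
  have "\<forall>v\<in>set a. of_int (int_step c v) + (if 0 < v then c else 0) = v"
    using int_step_shifted[OF assms] by force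
  then show ?thesis
    by (induction a) (auto simp: algebra_simps)
qed

lemma rank_eq_irank_int_steps:
  assumes "shifted_steps c a"
  defines "x \<equiv> map (int_step c) a"
  shows "rank a i = of_int (irank x i) + c * of_nat (ups x i)"
proof -
  have "shifted_steps c (take i a)"
    using assms(1) by (auto simp: shifted_steps_def dest: in_set_takeD)
  from length_filter_int_steps[OF this] sum_list_int_steps[OF this] show ?thesis
    by (simp add: rank_def irank_def x_def ups_def take_map)
qed

lemma sweep_order_eq_isweep_order:
  assumes "length x = length a"
    and "\<And>i j. i < length a \<Longrightarrow> j < length a \<Longrightarrow> sweep_key ltr x i < sweep_key ltr x j \<Longrightarrow>
           (rank a i, - int i) < (rank a j, - int j)"
  shows "sweep_order a = isweep_order ltr x"
  unfolding sweep_order_def assms(1)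
proof (rule sort_key_upt_eq[OF inj_on_sweep_key])
  show "inj_on (\<lambda>i. (rank a i, - int i)) {..<length a}"
    by (simp add: inj_on_def)
qed (rule assms(2))

lemma int_steps_sweep:
  assumes "sweep_order a = isweep_order ltr (map (int_step c) a)"
  shows "isweep ltr (map (int_step c) a) = map (int_step c) (sweep a)"
proof -
  have "\<forall>i\<in>set (sweep_order a). i < length a"
    by (simp add: sweep_order_def)
  then show ?thesis
    using assms by (simp add: isweep_def sweep_def)
qed

lemma shifted_path_int_steps:
  assumes a: "shifted_path c a"
  defines "x \<equiv> map (int_step c) a"
  shows "\<forall>v\<in>set x. v = -1 \<or> 1 \<le> v" and "length x = length a"
    and "\<And>i. rank a i = of_int (irank x i) + c * of_nat (ups x i)"
    and "\<And>i. i \<le> length x \<Longrightarrow> 0 \<le> rank a i" and "rank a (length x) = 0"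
    and "ups x (length x) = length (filter (\<lambda>v. 0 < v) a)"
    and "\<And>i. ups x i \<le> length (filter (\<lambda>v. 0 < v) a)"
proof -
  have steps: "shifted_steps c a"
    using a by (simp add: shifted_path_def)
  show "\<forall>v\<in>set x. v = -1 \<or> 1 \<le> v" "length x = length a"
    using int_steps_steps[OF steps] by (simp_all add: x_def)
  show "\<And>i. rank a i = of_int (irank x i) + c * of_nat (ups x i)"
    using rank_eq_irank_int_steps[OF steps] by (simp add: x_def)
  show "\<And>i. i \<le> length x \<Longrightarrow> 0 \<le> rank a i" "rank a (length x) = 0"
    using a by (simp_all add: shifted_path_def x_def rank_def)
  show ups: "ups x (length x) = length (filter (\<lambda>v. 0 < v) a)"
    using length_filter_int_steps[OF steps] by (simp add: x_def ups_def)
  show "\<And>i. ups x i \<le> length (filter (\<lambda>v. 0 < v) a)"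
    using ups_le_ups_length ups by metis
qed

lemma of_int_add_one_le: "i < j \<Longrightarrow> (of_int i :: 'a::linordered_idom) + 1 \<le> of_int j"
  by (metis of_int_1 of_int_add of_int_le_iff zless_imp_add1_zle)

lemma sweep_order_shift_zero:
  assumes a: "shifted_path 0 a"
  defines "x \<equiv> map (int_step 0) a"
  shows "int_path x" "irank x (length x) = 0" "sweep_order a = isweep_order False x"
proof -
  note facts = shifted_path_int_steps[OF a, folded x_def]
  have rank: "rank a i = of_int (irank x i)" for i
    using facts(3) by simp
  show "int_path x"
    using facts(1,4) rank by (simp add: int_path_def)
  show "irank x (length x) = 0"
    using facts(5) rank by simp
  show "sweep_order a = isweep_order False x"
    by (rule sweep_order_eq_isweep_order[OF facts(2)]) (auto simp: sweep_key_def rank)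
qed

lemma int_path_shift_pos:
  assumes a: "shifted_path c a" and n: "n = length (filter (\<lambda>v. 0 < v) a)" "1 \<le> n"
    and c: "c = 1 / of_nat n"
  defines "x \<equiv> map (int_step c) a"
  shows "int_path x" "irank x (length x) = -1"
proof -
  note facts = shifted_path_int_steps[OF a, folded x_def n(1)]
  have rank: "rank a i = of_int (irank x i) + of_nat (ups x i) / of_nat n" for i
    using facts(3) c by simp
  have frac_le: "of_nat (ups x i) / of_nat n \<le> (1::rat)" for i
    using facts(7)[of i] n(2) by (simp add: divide_le_eq_1)
  have "(of_int (irank x (length x)) :: rat) + 1 = 0"
    using rank[of "length x"] facts(5,6) n(2) by simp
  then have "(of_int (irank x (length x)) :: rat) = of_int (-1)"
    by simp
  then show last: "irank x (length x) = -1"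
    by (simp only: of_int_eq_iff)
  have "0 \<le> irank x i" if i: "i < length x" for i
  proof (rule ccontr)
    assume "\<not> ?thesis"
    then have "irank x i = -1" "of_nat (ups x i) / of_nat n = (1::rat)"
      using rank[of i] frac_le[of i] facts(4)[of i] i by linarith+
    then have "irank x i = -1" "ups x i = ups x (length x)"
      using n(2) facts(6) by simp_all
    then have "irank x (length x) = -1 - int (length x - i)"
      using irank_drop_if_no_ups[OF facts(1), of i "length x"] i by simp
    then show False
      using last i by simp
  qed
  then show "int_path x"
    using facts(1) by (simp add: int_path_def)
qed

lemma sweep_order_shift_pos:
  assumes a: "shifted_path c a" and n: "n = length (filter (\<lambda>v. 0 < v) a)" "1 \<le> n"
    and c: "c = 1 / of_nat n"
  defines "x \<equiv> map (int_step c) a"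
  shows "sweep_order a = isweep_order True x"
proof (rule sweep_order_eq_isweep_order)
  note facts = shifted_path_int_steps[OF a, folded x_def n(1)]
  show "length x = length a"
    by (rule facts(2))
  have rank: "rank a i = of_int (irank x i) + of_nat (ups x i) / of_nat n" for i
    using facts(3) c by simp
  fix i j assume ij: "i < length a" "j < length a" and key: "sweep_key True x i < sweep_key True x j"
  have "rank a i < rank a j"
  proof (cases "irank x i < irank x j")
    case True
    have "0 \<le> irank x i"
      using int_path_shift_pos[OF a n c] ij facts(2) by (simp add: int_path_def x_def)
    then have "ups x 0 < ups x j"
      using ups_less_if_irank_le[OF facts(1), of 0 j] True ij facts(2) by (cases "j = 0") auto
    then have "0 < of_nat (ups x j) / (of_nat n :: rat)"
      using n(2) by simp
    moreover have "of_nat (ups x i) / of_nat n \<le> (1::rat)"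
      using facts(7)[of i] n(2) by (simp add: divide_le_eq_1)
    ultimately show ?thesis
      using rank[of i] rank[of j] of_int_add_one_le[OF True, where 'a = rat] by linarith
  next
    case False
    then have "irank x i = irank x j" "i < j"
      using key by (auto simp: sweep_key_def)
    then have "ups x i < ups x j"
      using ups_less_if_irank_le[OF facts(1)] ij facts(2) by simp
    then show ?thesis
      using rank[of i] rank[of j] \<open>irank x i = irank x j\<close> n(2) by (simp add: divide_strict_right_mono)
  qed
  then show "(rank a i, - int i) < (rank a j, - int j)"
    by simp
qed

lemma irank_shift_neg:
  assumes a: "shifted_path c a" and n: "n = length (filter (\<lambda>v. 0 < v) a)" "1 \<le> n"
    and c: "c = - 1 / of_nat n"
  defines "x \<equiv> map (int_step c) a"
  shows "\<And>i. 0 < i \<Longrightarrow> i \<le> length x \<Longrightarrow> 1 \<le> irank x i" and "irank x (length x) = 1"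
proof -
  note facts = shifted_path_int_steps[OF a, folded x_def n(1)]
  have rank: "rank a i = of_int (irank x i) - of_nat (ups x i) / of_nat n" for i
    using facts(3) c by simp
  have "(of_int (irank x (length x)) :: rat) - 1 = 0"
    using rank[of "length x"] facts(5,6) n(2) by simp
  then have "(of_int (irank x (length x)) :: rat) = of_int 1"
    by simp
  then show "irank x (length x) = 1"
    by (simp only: of_int_eq_iff)
  fix i assume i: "0 < i" "i \<le> length x"
  have "0 \<le> of_nat (ups x i) / (of_nat n :: rat)"
    by simp
  then have "(0::rat) \<le> of_int (irank x i)"
    using rank[of i] facts(4)[OF i(2)] by linarith
  then have "0 \<le> irank x i"
    by simp
  moreover have "irank x i \<noteq> 0"
  proof
    assume "irank x i = 0"
    then have "ups x 0 < ups x i"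
      using ups_less_if_irank_le[OF facts(1) i] by simp
    then have "0 < of_nat (ups x i) / (of_nat n :: rat)"
      using n(2) by simp
    then show False
      using rank[of i] facts(4)[OF i(2)] \<open>irank x i = 0\<close> by simp
  qed
  ultimately show "1 \<le> irank x i"
    by simp
qed

lemma rank_pos_shift_neg:
  assumes a: "shifted_path c a" and n: "n = length (filter (\<lambda>v. 0 < v) a)" "1 \<le> n"
    and c: "c = - 1 / of_nat n" and j: "0 < j" "j < length a"
  shows "0 < rank a j"
proof -
  define x where "x = map (int_step c) a"
  note facts = shifted_path_int_steps[OF a, folded x_def n(1)]
  note above = irank_shift_neg[OF a n c, folded x_def]
  have rank: "rank a j = of_int (irank x j) - of_nat (ups x j) / of_nat n"
    using facts(3) c by simp
  show ?thesis
  proof (cases "ups x j = n")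
    case True
    then have "irank x (length x) = irank x j - int (length x - j)"
      using irank_drop_if_no_ups[OF facts(1), of j "length x"] facts(2,6) j by simp
    then have "2 \<le> irank x j"
      using above(2) facts(2) j by simp
    moreover have "of_nat (ups x j) / of_nat n \<le> (1::rat)"
      using facts(7)[of j] n(2) by (simp add: divide_le_eq_1)
    ultimately show ?thesis
      using rank by linarith
  next
    case False
    then have "of_nat (ups x j) / of_nat n < (1::rat)"
      using facts(7)[of j] n(2) by simp
    then show ?thesis
      using rank above(1)[of j] facts(2) j by linarith
  qed
qed

lemma sweep_order_shift_neg:
  assumes a: "shifted_path c a" and n: "n = length (filter (\<lambda>v. 0 < v) a)" "1 \<le> n"
    and c: "c = - 1 / of_nat n"
  defines "x \<equiv> map (int_step c) a"
  shows "sweep_order a = isweep_order False x"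
proof (rule sweep_order_eq_isweep_order)
  note facts = shifted_path_int_steps[OF a, folded x_def n(1)]
  note above = irank_shift_neg[OF a n c, folded x_def]
  show "length x = length a"
    by (rule facts(2))
  have rank: "rank a i = of_int (irank x i) - of_nat (ups x i) / of_nat n" for i
    using facts(3) c by simp
  have frac: "0 \<le> of_nat (ups x i) / (of_nat n :: rat)" "of_nat (ups x i) / (of_nat n :: rat) \<le> 1" for i
    using facts(7)[of i] n(2) by (simp_all add: divide_le_eq_1)
  fix i j assume ij: "i < length a" "j < length a" and key: "sweep_key False x i < sweep_key False x j"
  have "rank a i < rank a j"
  proof (cases "irank x i < irank x j")
    case True
    show ?thesis
    proof (cases "i = 0")
      case True
      then show ?thesis
        using rank_pos_shift_neg[OF a n c, of j] \<open>irank x i < irank x j\<close> ij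
        by (cases "j = 0") (auto simp: rank_def)
    next
      case False
      then have "ups x 0 < ups x i"
        using ups_less_if_irank_le[OF facts(1), of 0 i] above(1)[of i] ij facts(2) by simp
      then have "0 < of_nat (ups x i) / (of_nat n :: rat)"
        using n(2) by simp
      then show ?thesis
        using rank[of i] rank[of j] frac[of j] of_int_add_one_le[OF True, where 'a = rat] by linarith
    qed
  next
    case False
    then have "irank x i = irank x j" "j < i"
      using key by (auto simp: sweep_key_def)
    then have "ups x j < ups x i"
      using ups_less_if_irank_le[OF facts(1)] ij facts(2) by simp
    then show ?thesis
      using rank[of i] rank[of j] \<open>irank x i = irank x j\<close> n(2) by (simp add: divide_strict_right_mono)
  qed
  then show "(rank a i, - int i) < (rank a j, - int j)"
    by simp
qed

section \<open>The sweep map preserves the sets \<open>D\<^sub>K\<close>\<close>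

text \<open>Telescoping \<open>min (rank a p) g\<close> over all positions \<open>p\<close>: the steps starting below \<open>g\<close>
  have to make up for every down step that leaves level \<open>g\<close>.\<close>

lemma down_steps_at_level_le_sum_below:
  fixes a :: "rat list"
  assumes "sum_list a = 0"
  shows "of_nat (card {p. p < length a \<and> rank a p = g \<and> a ! p = -1})
         \<le> (\<Sum>p | p < length a \<and> rank a p < g. a ! p)"
proof -
  let ?N = "length a"
  define d where "d p = min (rank a (Suc p)) g - min (rank a p) g" for p
  define A where "A = {p. p < ?N \<and> rank a p < g}"
  define E where "E = {p. p < ?N \<and> rank a p = g \<and> a ! p = -1}"
  have rank_Suc: "rank a (Suc p) = rank a p + a ! p" if "p < ?N" for p
    using that by (simp add: rank_def take_Suc_conv_app_nth)
  have "(\<Sum>p<?N. d p) = 0"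
    unfolding d_def using sum_lessThan_telescope[of "\<lambda>i. min (rank a i) g" ?N] assms
    by (simp add: rank_def)
  moreover have "(\<Sum>p<?N. d p) = (\<Sum>p\<in>A. d p) + (\<Sum>p\<in>E. d p) + (\<Sum>p\<in>{..<?N} - A - E. d p)"
  proof -
    have "A \<subseteq> {..<?N}" "E \<subseteq> {..<?N} - A"
      by (auto simp: A_def E_def)
    then show ?thesis
      using sum.subset_diff[of A "{..<?N}" d] sum.subset_diff[of E "{..<?N} - A" d] by simp
  qed
  moreover have "(\<Sum>p\<in>A. d p) \<le> (\<Sum>p\<in>A. a ! p)"
    using rank_Suc by (intro sum_mono) (auto simp: d_def A_def)
  moreover have "(\<Sum>p\<in>E. d p) = - of_nat (card E)"
    using rank_Suc by (simp add: d_def E_def)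
  moreover have "(\<Sum>p\<in>{..<?N} - A - E. d p) \<le> 0"
    by (intro sum_nonpos) (auto simp: d_def A_def)
  ultimately show ?thesis
    by (simp add: A_def E_def)
qed

lemma sum_steps_between_levels_nonneg:
  fixes a :: "rat list"
  assumes steps: "\<forall>v\<in>set a. 0 < v \<or> v = -1" and "sum_list a = 0"
    and below: "{p. p < length a \<and> rank a p < g} \<subseteq> S"
    and upto: "S \<subseteq> {p. p < length a \<and> rank a p \<le> g}"
  shows "0 \<le> (\<Sum>p\<in>S. a ! p)"
proof -
  let ?A = "{p. p < length a \<and> rank a p < g}" and ?E = "{p. p < length a \<and> rank a p = g \<and> a ! p = -1}"
  have fin: "finite S"
    using upto by (rule finite_subset) simp
  have "(if p \<in> ?E then -1 else 0) \<le> a ! p" if "p \<in> S - ?A" for p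
  proof -
    have "p < length a" "rank a p = g"
      using that upto by auto
    moreover have "0 < a ! p \<or> a ! p = -1"
      using steps \<open>p < length a\<close> by simp
    ultimately show ?thesis
      by auto
  qed
  then have "(\<Sum>p\<in>S - ?A. if p \<in> ?E then -1 else 0) \<le> (\<Sum>p\<in>S - ?A. a ! p)"
    by (rule sum_mono)
  moreover have "(\<Sum>p\<in>S - ?A. if p \<in> ?E then -1 else (0::rat)) = - of_nat (card ((S - ?A) \<inter> ?E))"
    using fin by (simp add: sum.If_cases)
  moreover have "card ((S - ?A) \<inter> ?E) \<le> card ?E"
    by (rule card_mono) auto
  moreover have "(\<Sum>p\<in>S. a ! p) = (\<Sum>p\<in>?A. a ! p) + (\<Sum>p\<in>S - ?A. a ! p)"
    using sum.subset_diff[OF below fin, of "(!) a"] by (simp add: add.commute)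
  ultimately show ?thesis
    using down_steps_at_level_le_sum_below[OF assms(2), of g] by linarith
qed

lemma mset_sweep: "mset (sweep a) = mset a"
proof -
  have "mset (sweep a) = image_mset (nth a) (mset [0..<length a])"
    by (simp add: sweep_def sweep_order_def)
  also have "\<dots> = mset a"
    by (metis map_nth mset_map)
  finally show ?thesis .
qed

lemma rank_sweep_nonneg:
  fixes a :: "rat list"
  assumes steps: "\<forall>v\<in>set a. 0 < v \<or> v = -1" and sum: "sum_list a = 0"
    and i: "i \<le> length (sweep a)"
  shows "0 \<le> rank (sweep a) i"
proof (cases "i < length a")
  case True
  let ?key = "\<lambda>i. (rank a i, - int i)" and ?p = "sweep_order a"
  have inj: "inj_on ?key {..<length a}"
    by (simp add: inj_on_def)
  have "rank (sweep a) i = sum_list (map (nth a) (take i ?p))"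
    by (simp add: rank_def sweep_def take_map)
  also have "\<dots> = (\<Sum>p\<in>set (take i ?p). a ! p)"
    by (simp add: sum_list_distinct_conv_sum_set sweep_order_def)
  also have "set (take i ?p) = {q. q < length a \<and> ?key q < ?key (?p ! i)}"
    unfolding sweep_order_def by (rule set_take_sort_key_upt[OF inj True])
  finally have "rank (sweep a) i = (\<Sum>p | p < length a \<and> ?key p < ?key (?p ! i). a ! p)" .
  also have "0 \<le> \<dots>"
    by (rule sum_steps_between_levels_nonneg[OF steps sum]) auto
  finally show ?thesis .
next
  case False
  then have "rank (sweep a) i = sum_list (sweep a)"
    using i by (simp add: rank_def sweep_def sweep_order_def)
  also have "\<dots> = sum_list a"
    by (metis mset_sweep sum_mset_sum_list)
  finally show ?thesis
    using sum by simp
qed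

lemma sum_list_steps:
  fixes a :: "rat list"
  assumes "\<forall>v\<in>set a. 0 < v \<or> v = -1"
  shows "sum_list a = sum_list (filter (\<lambda>v. 0 < v) a) - of_nat (length (filter (\<lambda>v. \<not> 0 < v) a))"
  using assms by (induction a) auto

lemma shiftv_eq_if_mset_eq:
  assumes "mset u = mset (shiftv c k)"
  obtains k' where "mset k' = mset k" "shiftv c k' = u"
proof
  let ?unshift = "\<lambda>v. nat \<lfloor>v - c\<rfloor>"
  have "of_nat (?unshift v) + c = v" if "v \<in> set u" for v
  proof -
    have "v \<in> set (shiftv c k)"
      using that assms by (metis mset_eq_setD)
    then obtain \<kappa> :: nat where "v = of_nat \<kappa> + c"
      by (auto simp: shiftv_def)
    then show ?thesis
      by simp
  qed
  then show "shiftv c (map ?unshift u) = u"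
    unfolding shiftv_def map_map by (intro map_idI) simp
  have "mset (map ?unshift u) = image_mset (?unshift \<circ> (\<lambda>\<kappa>. of_nat \<kappa> + c)) (mset k)"
    using assms by (simp add: shiftv_def image_mset.compositionality)
  also have "?unshift \<circ> (\<lambda>\<kappa>. of_nat \<kappa> + c) = id"
    by auto
  finally show "mset (map ?unshift u) = mset k"
    by simp
qed

lemma mem_DK_iff:
  "a \<in> DK c k \<longleftrightarrow>
     mset (filter (\<lambda>v. 0 < v) a) = mset (shiftv c k) \<and> (\<forall>v\<in>set a. 0 < v \<or> v = -1)
     \<and> sum_list a = 0 \<and> (\<forall>i\<le>length a. 0 \<le> rank a i)"
  (is "_ \<longleftrightarrow> ?ups \<and> ?steps \<and> ?sum \<and> ?ranks")
proof
  assume "a \<in> DK c k"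
  then obtain k' m where k': "mset k' = mset k" and m: "sum_list (shiftv c k') = of_nat m"
    "length a = length (shiftv c k') + m" "filter (\<lambda>v. 0 < v) a = shiftv c k'" and ?steps ?ranks
    unfolding DK_def Dset_def by auto
  moreover have "?ups"
    using k' m(3) by (simp add: shiftv_def)
  moreover have "length (filter (\<lambda>v. \<not> 0 < v) a) = m"
    using sum_length_filter_compl[of "\<lambda>v. 0 < v" a] m(2,3) by simp
  ultimately show "?ups \<and> ?steps \<and> ?sum \<and> ?ranks"
    using sum_list_steps[of a] by simp
next
  assume "?ups \<and> ?steps \<and> ?sum \<and> ?ranks"
  then have ups: ?ups and steps: ?steps and sum: ?sum and ranks: ?ranks
    by simp_all
  obtain k' where perm: "mset k' = mset k" and shift: "shiftv c k' = filter (\<lambda>v. 0 < v) a"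
    using shiftv_eq_if_mset_eq[OF ups] by blast
  define m where "m = length (filter (\<lambda>v. \<not> 0 < v) a)"
  have "a \<in> Dset (shiftv c k')"
    unfolding Dset_def
  proof (intro CollectI exI[of _ m] conjI)
    show "sum_list (shiftv c k') = of_nat m"
      using sum_list_steps[OF steps] sum shift by (simp add: m_def)
    show "length a = length (shiftv c k') + m"
      using sum_length_filter_compl[of "\<lambda>v. 0 < v" a] shift by (simp add: m_def)
  qed (use shift steps ranks in auto)
  with perm show "a \<in> DK c k"
    unfolding DK_def by blast
qed

lemma sweep_mem_DK:
  assumes "a \<in> DK c k"
  shows "sweep a \<in> DK c k"
proof -
  have "mset (filter (\<lambda>v. 0 < v) (sweep a)) = mset (filter (\<lambda>v. 0 < v) a)"
    by (simp add: mset_sweep)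
  moreover have "set (sweep a) = set a" "sum_list (sweep a) = sum_list a"
    by (metis mset_sweep mset_eq_setD, metis mset_sweep sum_mset_sum_list)
  ultimately show ?thesis
    using assms rank_sweep_nonneg[of a] unfolding mem_DK_iff by simp
qed

lemma finite_Dset: "finite (Dset u)"
proof (rule finite_subset)
  show "Dset u \<subseteq> {a. set a \<subseteq> insert (-1) (set u) \<and> length a = length u + nat \<lfloor>sum_list u\<rfloor>}"
  proof safe
    fix a v assume a: "a \<in> Dset u" and v: "v \<in> set a" "v \<notin> set u"
    then have ups: "filter (\<lambda>v. 0 < v) a = u" and "\<forall>v\<in>set a. 0 < v \<or> v = -1"
      unfolding Dset_def by auto
    moreover have "v \<notin> set (filter (\<lambda>v. 0 < v) a)"
      using v(2) ups by simp
    ultimately show "v = -1"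
      using v(1) by auto
  qed (auto simp: Dset_def)
  show "finite {a. set a \<subseteq> insert (-1) (set u) \<and> length a = length u + nat \<lfloor>sum_list u\<rfloor>}"
    by (rule finite_lists_length_eq) simp
qed

lemma finite_DK: "finite (DK c k)"
  unfolding DK_def using mset_eq_finite[of k] finite_Dset by blast

lemma bij_betw_sweep_DK:
  assumes "inj_on sweep (DK c k)"
  shows "bij_betw sweep (DK c k) (DK c k)"
  using assms endo_inj_surj[OF finite_DK _ assms] sweep_mem_DK by (auto simp: bij_betw_def)

section \<open>Injectivity\<close>

lemma shifted_path_if_mem_DK:
  assumes a: "a \<in> DK c k" and pos: "\<forall>\<kappa>\<in>set k. 0 < \<kappa>"
  shows "shifted_path c a" and "length (filter (\<lambda>v. 0 < v) a) = length k"
proof -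
  have ups: "mset (filter (\<lambda>v. 0 < v) a) = mset (shiftv c k)"
    and steps: "\<forall>v\<in>set a. 0 < v \<or> v = -1"
    using a unfolding mem_DK_iff by simp_all
  show "length (filter (\<lambda>v. 0 < v) a) = length k"
    using ups by (metis length_map shiftv_def size_mset)
  have "\<exists>\<kappa>::nat. 1 \<le> \<kappa> \<and> v = of_nat \<kappa> + c" if "v \<in> set a" "0 < v" for v
  proof -
    have "v \<in> set (filter (\<lambda>v. 0 < v) a)"
      using that by simp
    then have "v \<in> set (shiftv c k)"
      using ups by (metis mset_eq_setD)
    then show ?thesis
      using pos by (auto simp: shiftv_def Suc_le_eq)
  qed
  then have "shifted_steps c a"
    using steps by (auto simp: shifted_steps_def)
  then show "shifted_path c a"
    using a unfolding mem_DK_iff shifted_path_def by simp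
qed

lemma inj_on_sweep_if_int_model:
  assumes model: "\<And>a. a \<in> A \<Longrightarrow> shifted_steps c a \<and> sweep_order a = isweep_order ltr (map (int_step c) a)"
    and inj: "inj_on (isweep ltr) (map (int_step c) ` A)"
  shows "inj_on sweep A"
proof (rule inj_onI)
  fix a b assume a: "a \<in> A" and b: "b \<in> A" and "sweep a = sweep b"
  then have "isweep ltr (map (int_step c) a) = isweep ltr (map (int_step c) b)"
    using int_steps_sweep model by metis
  then have "map (int_step c) a = map (int_step c) b"
    using inj_onD[OF inj] a b by blast
  then show "a = b"
    using int_steps_inj model a b by blast
qed

lemma inj_on_sweep_DK_zero:
  assumes "\<forall>\<kappa>\<in>set k. 0 < \<kappa>"
  shows "inj_on sweep (DK 0 k)"
proof (rule inj_on_sweep_if_int_model)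
  have model: "shifted_path 0 a" if "a \<in> DK 0 k" for a
    using shifted_path_if_mem_DK that assms by blast
  show "shifted_steps 0 a \<and> sweep_order a = isweep_order False (map (int_step 0) a)"
    if "a \<in> DK 0 k" for a
    using sweep_order_shift_zero(3)[OF model[OF that]] model[OF that] by (simp add: shifted_path_def)
  have int_model: "int_path x \<and> irank x (length x) = 0" if x: "x \<in> map (int_step 0) ` DK 0 k" for x
  proof -
    obtain a where "a \<in> DK 0 k" "x = map (int_step 0) a"
      using x by blast
    then show ?thesis
      using sweep_order_shift_zero(1,2)[OF model] by simp
  qed
  show "inj_on (isweep False) (map (int_step 0) ` DK 0 k)"
  proof (rule inj_onI)
    fix x y assume x: "x \<in> map (int_step 0) ` DK 0 k" and y: "y \<in> map (int_step 0) ` DK 0 k"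
      and sweep: "isweep False x = isweep False y"
    have "length y = length x"
      using length_isweep[of False x] length_isweep[of False y] sweep by simp
    then show "x = y"
      using int_model[OF x] int_model[OF y] isweep_inj[OF _ _ _ _ _ order.refl _ sweep] by simp
  qed
qed

lemma inj_on_sweep_DK_pos:
  assumes "\<forall>\<kappa>\<in>set k. 0 < \<kappa>" and "1 \<le> length k"
  shows "inj_on sweep (DK (1 / of_nat (length k)) k)"
proof (rule inj_on_sweep_if_int_model)
  let ?c = "1 / of_nat (length k) :: rat"
  have model: "shifted_path ?c a" "length k = length (filter (\<lambda>v. 0 < v) a)" if "a \<in> DK ?c k" for a
    using shifted_path_if_mem_DK that assms(1) by simp_all
  show "shifted_steps ?c a \<and> sweep_order a = isweep_order True (map (int_step ?c) a)"
    if "a \<in> DK ?c k" for a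
    using sweep_order_shift_pos[OF model[OF that] assms(2) refl] model[OF that]
    by (simp add: shifted_path_def)
  have int_model: "int_path x \<and> irank x (length x) = -1" if x: "x \<in> map (int_step ?c) ` DK ?c k" for x
  proof -
    obtain a where "a \<in> DK ?c k" "x = map (int_step ?c) a"
      using x by blast
    then show ?thesis
      using int_path_shift_pos[OF model assms(2) refl] by simp
  qed
  show "inj_on (isweep True) (map (int_step ?c) ` DK ?c k)"
  proof (rule inj_onI)
    fix x y assume x: "x \<in> map (int_step ?c) ` DK ?c k" and y: "y \<in> map (int_step ?c) ` DK ?c k"
      and sweep: "isweep True x = isweep True y"
    have "length y = length x"
      using length_isweep[of True x] length_isweep[of True y] sweep by simp
    then show "x = y"
      using int_model[OF x] int_model[OF y] isweep_inj[OF _ _ _ _ _ _ _ sweep] by simp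
  qed
qed

lemma inj_on_sweep_DK_neg:
  assumes "\<forall>\<kappa>\<in>set k. 0 < \<kappa>" and "1 \<le> length k"
  shows "inj_on sweep (DK (- 1 / of_nat (length k)) k)"
proof (rule inj_on_sweep_if_int_model)
  let ?c = "- 1 / of_nat (length k) :: rat"
  have model: "shifted_path ?c a" "length k = length (filter (\<lambda>v. 0 < v) a)" if "a \<in> DK ?c k" for a
    using shifted_path_if_mem_DK that assms(1) by simp_all
  show "shifted_steps ?c a \<and> sweep_order a = isweep_order False (map (int_step ?c) a)"
    if "a \<in> DK ?c k" for a
    using sweep_order_shift_neg[OF model[OF that] assms(2) refl] model[OF that]
    by (simp add: shifted_path_def)
  have int_model: "(\<forall>v\<in>set x. v = -1 \<or> 1 \<le> v) \<and> 0 < length x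
      \<and> (\<forall>i. 0 < i \<and> i \<le> length x \<longrightarrow> 1 \<le> irank x i) \<and> irank x (length x) = 1"
    if x: "x \<in> map (int_step ?c) ` DK ?c k" for x
  proof -
    obtain a where a: "a \<in> DK ?c k" "x = map (int_step ?c) a"
      using x by blast
    have "0 < length (filter (\<lambda>v. 0 < v) a)"
      using model(2)[OF a(1)] assms(2) by linarith
    then have "0 < length x"
      using a(2) by (metis length_filter_le length_map less_le_trans)
    then show ?thesis
      using irank_shift_neg[OF model[OF a(1)] assms(2) refl] shifted_path_int_steps(1)[OF model(1)[OF a(1)]]
        a(2) by blast
  qed
  show "inj_on (isweep False) (map (int_step ?c) ` DK ?c k)"
  proof (rule inj_onI)
    fix x y assume x: "x \<in> map (int_step ?c) ` DK ?c k" and y: "y \<in> map (int_step ?c) ` DK ?c k"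
      and sweep: "isweep False x = isweep False y"
    show "x = y"
      using int_model[OF x] int_model[OF y] by (intro isweep_inj_end_one[OF _ _ _ _ _ _ _ _ sweep]) auto
  qed
qed

theorem mainTheorem1:
  fixes k :: "nat list"
  assumes "length k \<ge> 1"
    and "\<forall>x\<in>set k. 0 < x"
  shows "bij_betw sweep (DK (1 / of_nat (length k)) k) (DK (1 / of_nat (length k)) k)
       \<and> bij_betw sweep (DK (- 1 / of_nat (length k)) k) (DK (- 1 / of_nat (length k)) k)
       \<and> bij_betw sweep (DK 0 k) (DK 0 k)"
  using bij_betw_sweep_DK inj_on_sweep_DK_pos[OF assms(2,1)] inj_on_sweep_DK_neg[OF assms(2,1)]
    inj_on_sweep_DK_zero[OF assms(2)] by blast

end
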